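(* For $\delta\in(0,\tfrac16)$, let $\mathbb E[Q]$ be the stationary mean number of items in the FCFS matching model on the graph with nodes $\{1,2,3,4\}$ and edges $\{1,3\},\{1,4\},\{2,3\},\{2,4\},\{3,4\}$, and let $\mathbb E[\overline Q]$ be the same quantity for the complete graph on $\{1,2,3,4\}$ (i.e. after adding the edge $\{1,2\}$), both with arrival distribution $\alpha_1=\alpha_2=0.25-\delta$, $\alpha_3=0.5-\delta$, $\alpha_4=3\delta$. Then there exist numbers $0<\delta_1<\delta_2<\tfrac16$ with $\delta_1\approx0.0563$ and $\delta_2\approx 0.134$ such that a Braess paradox occurs, i.e. $\mathbb E[\overline Q]>\mathbb E[Q]$, if and only if $\delta\in(0,\delta_1)\cup(\delta_2,\tfrac16)$.
   Context: A matching model consists of a finite connected simple graph $\mathcal G=(\mathcal V,\xi)$ (the compatibility graph), $\mathcal V=\{1,\dots,n\}$, and a probability distribution $\alpha=(\alpha_1,\dots,\alpha_n)$ on $\mathcal V$ with all $\alpha_i>0$. In each time step an item of class $i$ arrives with probability proportional to $\alpha_i$ (time steps with no arrival do not affect stationary quantities). For $i\in\mathcal V$ let $\mathcal E(i)$ be the set of neighbours of $i$ in $\mathcal G$; for $V\subseteq\mathcal V$ let $\mathcal E(V)=\bigcup_{i\in V}\mathcal E(i)$ and $|\alpha_V|=\sum_{i\in V}\alpha_i$. The state of the system is a finite word $w=w_1\cdots w_q$ over $\mathcal V$ in which no two letters are adjacent in $\mathcal G$ (the classes of the unmatched items in order of arrival). Under the First Come First Served (FCFS) policy, if an item of class $i$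 arrives in state $w$: if some letter of $w$ lies in $\mathcal E(i)$, the first (oldest) such letter is deleted (the two items are matched and leave); otherwise $i$ is appended at the end of $w$. This defines a Markov chain $W$. An independent set is a non-empty subset of $\mathcal V$ no two of whose elements are adjacent; $\mathbb I$ denotes the set of independent sets of $\mathcal G$. The stability condition is $|\alpha_{\mathcal I}|<|\alpha_{\mathcal E(\mathcal I)}|$ for all $\mathcal I\in\mathbb I$; under it $W$ is positive recurrent with unique stationary distribution $\pi(w)=\pi_0\prod_{i=1}^q\alpha_{w_i}/|\alpha_{\mathcal E(\{w_1,\dots,w_i\})}|$. $Q$ is the number of items in the system (length of the word), and $\mathbb E[Q]$ its mean under the stationary distribution. Given two distinct non-adjacent nodes $i^*,j^*$ of $\mathcal G$, $\overline{\mathcal G}$ is $\mathcal G$ with the edge $\{i^*,j^*\}$ added and $\mathbb E[\overline Q]$ is the corresponding stationary mean for $\overline{\mathcal G}$ with the same $\alpha$. A Braess paradox occurs if $\mathbb E[\overline Q]>\mathbb E[Q]$. *)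

theory Defs
  imports "HOL-Analysis.Analysis"
begin

definition nbhd :: "(nat \<Rightarrow> nat \<Rightarrow> bool) \<Rightarrow> nat set \<Rightarrow> nat set \<Rightarrow> nat set" where
  "nbhd E V S = {j \<in> V. \<exists>i\<in>S. E i j}"

definition alpha_sum :: "(nat \<Rightarrow> real) \<Rightarrow> nat set \<Rightarrow> real" where
  "alpha_sum alpha S = (\<Sum>i\<in>S. alpha i)"

definition fcfs_states :: "(nat \<Rightarrow> nat \<Rightarrow> bool) \<Rightarrow> nat set \<Rightarrow> nat list set" where
  "fcfs_states E V = {w. set w \<subseteq> V \<and>
      (\<forall>i<length w. \<forall>j<length w. \<not> E (w ! i) (w ! j))}"

definition fcfs_weight :: "(nat \<Rightarrow> real) \<Rightarrow> (nat \<Rightarrow> nat \<Rightarrow> bool) \<Rightarrow> nat set \<Rightarrow> nat list \<Rightarrow> real" where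
  "fcfs_weight alpha E V w =
     (\<Prod>i<length w. alpha (w ! i) / alpha_sum alpha (nbhd E V (set (take (Suc i) w))))"

definition fcfs_pi :: "(nat \<Rightarrow> real) \<Rightarrow> (nat \<Rightarrow> nat \<Rightarrow> bool) \<Rightarrow> nat set \<Rightarrow> nat list \<Rightarrow> real" where
  "fcfs_pi alpha E V w =
     fcfs_weight alpha E V w / (\<Sum>\<^sub>\<infinity>v\<in>fcfs_states E V. fcfs_weight alpha E V v)"

definition fcfs_mean_Q :: "(nat \<Rightarrow> real) \<Rightarrow> (nat \<Rightarrow> nat \<Rightarrow> bool) \<Rightarrow> nat set \<Rightarrow> real" where
  "fcfs_mean_Q alpha E V = (\<Sum>\<^sub>\<infinity>w\<in>fcfs_states E V. real (length w) * fcfs_pi alpha E V w)"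

definition V4 :: "nat set" where "V4 = {1,2,3,4}"

definition G_edge :: "nat \<Rightarrow> nat \<Rightarrow> bool" where
  "G_edge i j \<longleftrightarrow> {i,j} \<in> {{1,3},{1,4},{2,3},{2,4},{3,4}}"

definition Gbar_edge :: "nat \<Rightarrow> nat \<Rightarrow> bool" where
  "Gbar_edge i j \<longleftrightarrow> {i,j} \<in> {{1,2},{1,3},{1,4},{2,3},{2,4},{3,4}}"

definition alpha_delta :: "real \<Rightarrow> nat \<Rightarrow> real" where
  "alpha_delta \<delta> i = (if i = 1 \<or> i = 2 then 1/4 - \<delta> else if i = 3 then 1/2 - \<delta>
                        else if i = 4 then 3 * \<delta> else 0)"

end

theory Submission
  imports Defs
begin

(* Both graphs are complete multipartite: the complete graph has the four singleton classes,
   G has the classes {1,2}, {3}, {4}.  In a complete multipartite graph a word is an FCFS state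
   iff all its letters lie in one class C, and then every nonempty prefix has neighbourhood
   V - C.  Hence the product-form weights of the states of length k > 0 in class C sum to
   r_C^k with r_C = alpha_C / (alpha_V - alpha_C), and summing geometric series gives
   E[Q] = (sum_C s_C (1 + s_C)) / (1 + sum_C s_C) with s_C = alpha_C / (alpha_V - 2 alpha_C).
   For alpha_delta, cross-multiplying the two means leaves the sign of an explicit polynomial
   Q(delta) of degree 7, which is positive, negative, positive on (0, 1/6) with sign changes
   near 0.0563 and 0.134; this is certified by interval Horner bounds on subintervals and,
   around the two roots, by the sign of Q'. *)

section \<open>Series over words graded by length\<close>

lemma has_sum_by_length:
  fixes f :: "'a list \<Rightarrow> real"
  assumes finite: "\<And>k. finite {w\<in>S. length w = k}"
    and nonneg: "\<And>w. w \<in> S \<Longrightarrow> 0 \<le> f w"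
    and sums: "(\<lambda>k. sum f {w\<in>S. length w = k}) sums z"
  shows "(f has_sum z) S"
proof -
  let ?B = "\<lambda>k. {w\<in>S. length w = k}"
  have slices: "((\<lambda>w. (f \<circ> snd) (k, w)) has_sum sum f (?B k)) (?B k)" for k
    using finite by simp
  have "((\<lambda>k. sum f (?B k)) has_sum z) UNIV"
    using sums nonneg by (intro sums_nonneg_imp_has_sum) (auto intro: sum_nonneg)
  moreover from this have "(f \<circ> snd) summable_on Sigma UNIV ?B"
    using nonneg by (intro summable_on_SigmaI[OF slices]) (auto intro: has_sum_imp_summable)
  ultimately have "((f \<circ> snd) has_sum z) (Sigma UNIV ?B)"
    by (intro has_sum_SigmaI[OF slices])
  moreover have "inj_on snd (Sigma UNIV ?B)" "snd ` Sigma UNIV ?B = S"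
    by (auto simp: inj_on_def) force
  ultimately show ?thesis
    using has_sum_reindex[of snd "Sigma UNIV ?B" f z] by simp
qed

lemma mean_length_by_slices:
  fixes f :: "'a list \<Rightarrow> real"
  assumes finite: "\<And>k. finite {w\<in>S. length w = k}"
    and nonneg: "\<And>w. w \<in> S \<Longrightarrow> 0 \<le> f w"
    and mass: "(\<lambda>k. sum f {w\<in>S. length w = k}) sums z"
    and moment: "(\<lambda>k. real k * sum f {w\<in>S. length w = k}) sums m"
  shows "(\<Sum>\<^sub>\<infinity>w\<in>S. real (length w) * (f w / (\<Sum>\<^sub>\<infinity>v\<in>S. f v))) = m / z"
proof -
  have "(\<Sum>\<^sub>\<infinity>v\<in>S. f v) = z"
    by (intro infsumI has_sum_by_length[OF finite nonneg mass])
  moreover have "((\<lambda>w. real (length w) * f w) has_sum m) S"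
    using nonneg moment by (intro has_sum_by_length[OF finite]) (auto simp: sum_distrib_left)
  then have "((\<lambda>w. real (length w) * (f w / z)) has_sum (m / z)) S"
    using has_sum_cmult_right[where c = "1 / z"] by (simp add: field_simps)
  ultimately show ?thesis
    by (simp add: infsumI)
qed

lemma geometric_sums_Suc:
  fixes r :: real
  assumes "\<bar>r\<bar> < 1"
  shows "(\<lambda>n. r ^ Suc n) sums (r / (1 - r))"
  using sums_mult[OF geometric_sums[of r], of r] assms by simp

lemma weighted_geometric_sums:
  fixes r :: real
  assumes "\<bar>r\<bar> < 1"
  shows "(\<lambda>n. real n * r ^ n) sums (r / (1 - r)^2)"
proof -
  have "(\<lambda>n. r * (real (Suc n) * r ^ n)) sums (r * (1 / (1 - r)^2))"
    using assms by (intro sums_mult geometric_deriv_sums) auto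
  then have "(\<lambda>n. real (Suc n) * r ^ Suc n) sums (r / (1 - r)^2)"
    by (simp add: algebra_simps)
  then show ?thesis
    using sums_Suc_iff[of "\<lambda>n. real n * r ^ n"] by simp
qed

lemma geometric_ratio_identities:
  fixes c v :: real
  assumes "0 \<le> c" "2 * c < v"
  shows "\<bar>c / (v - c)\<bar> < 1" "c / (v - c) / (1 - c / (v - c)) = c / (v - 2 * c)"
    "c / (v - c) / (1 - c / (v - c))^2 = c / (v - 2 * c) * (1 + c / (v - 2 * c))"
proof -
  have pos: "0 < v - c" "0 < v - 2 * c"
    using assms by linarith+
  have one_minus: "1 - c / (v - c) = (v - 2 * c) / (v - c)"
    using pos by (simp add: diff_divide_eq_iff)
  show "\<bar>c / (v - c)\<bar> < 1"
    using assms pos by simp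
  show "c / (v - c) / (1 - c / (v - c)) = c / (v - 2 * c)"
    using pos by (simp add: one_minus)
  show "c / (v - c) / (1 - c / (v - c))^2 = c / (v - 2 * c) * (1 + c / (v - 2 * c))"
  proof -
    have "1 + c / (v - 2 * c) = (v - c) / (v - 2 * c)"
      using pos by (simp add: add_divide_eq_iff)
    then show ?thesis
      using pos by (simp add: one_minus power2_eq_square)
  qed
qed

lemma sum_prod_lists_length_eq:
  fixes f :: "'a \<Rightarrow> 'b::comm_semiring_1"
  assumes "finite A"
  shows "(\<Sum>w | set w \<subseteq> A \<and> length w = k. \<Prod>i<k. f (w ! i)) = (\<Sum>x\<in>A. f x) ^ k"
proof (induction k)
  case 0
  have "{w. set w \<subseteq> A \<and> length w = 0} = {[]}" by auto
  then show ?case by simp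
next
  case (Suc k)
  let ?W = "{w. set w \<subseteq> A \<and> length w = k}"
  have "(\<Sum>w | set w \<subseteq> A \<and> length w = Suc k. \<Prod>i<Suc k. f (w ! i))
      = (\<Sum>(w, x) \<in> ?W \<times> A. \<Prod>i<Suc k. f ((x # w) ! i))"
    by (rule sum.reindex_cong[OF inj_split_Cons lists_length_Suc_eq]) auto
  also have "\<dots> = (\<Sum>w\<in>?W. \<Sum>x\<in>A. (\<Prod>i<k. f (w ! i)) * f x)"
    by (simp add: sum.cartesian_product prod.lessThan_Suc_shift mult.commute del: prod.lessThan_Suc)
  also have "\<dots> = (\<Sum>w\<in>?W. \<Prod>i<k. f (w ! i)) * (\<Sum>x\<in>A. f x)"
    by (rule sum_product[symmetric])
  also have "\<dots> = (\<Sum>x\<in>A. f x) ^ Suc k"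
    by (simp add: Suc mult.commute)
  finally show ?case .
qed

section \<open>FCFS matching on complete multipartite graphs\<close>

lemma fcfs_weight_nonneg:
  assumes "\<And>i. i \<in> V \<Longrightarrow> 0 \<le> alpha i" and "w \<in> fcfs_states E V"
  shows "0 \<le> fcfs_weight alpha E V w"
proof -
  have "set w \<subseteq> V" using assms(2) by (simp add: fcfs_states_def)
  then show ?thesis
    using assms(1) unfolding fcfs_weight_def alpha_sum_def nbhd_def
    by (intro prod_nonneg divide_nonneg_nonneg sum_nonneg) (auto simp: subset_iff)
qed

locale complete_multipartite =
  fixes E :: "nat \<Rightarrow> nat \<Rightarrow> bool" and V :: "nat set" and part :: "nat \<Rightarrow> 'p"
  assumes finite_V: "finite V"
    and edge_iff: "E i j \<longleftrightarrow> i \<in> V \<and> j \<in> V \<and> part i \<noteq> part j"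
begin

definition part_class :: "'p \<Rightarrow> nat set" where
  "part_class p = {i \<in> V. part i = p}"

definition class_ratio :: "(nat \<Rightarrow> real) \<Rightarrow> 'p \<Rightarrow> real" where
  "class_ratio alpha p =
     alpha_sum alpha (part_class p) / (alpha_sum alpha V - alpha_sum alpha (part_class p))"

lemma fcfs_states_iff:
  "w \<in> fcfs_states E V \<longleftrightarrow> set w \<subseteq> V \<and> (\<forall>i\<in>set w. \<forall>j\<in>set w. part i = part j)"
proof -
  have "(\<forall>i<length w. \<forall>j<length w. \<not> E (w ! i) (w ! j)) \<longleftrightarrow> (\<forall>i\<in>set w. \<forall>j\<in>set w. part i = part j)"
    if "set w \<subseteq> V"
  proof -
    have "w ! i \<in> V" if "i < length w" for i
      using \<open>set w \<subseteq> V\<close> nth_mem[OF that] by blast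
    then have "(\<forall>i<length w. \<forall>j<length w. \<not> E (w ! i) (w ! j)) \<longleftrightarrow>
        (\<forall>i<length w. \<forall>j<length w. part (w ! i) = part (w ! j))"
      by (simp add: edge_iff)
    then show ?thesis
      by (simp add: all_set_conv_all_nth)
  qed
  then show ?thesis
    unfolding fcfs_states_def by blast
qed

lemma fcfs_states_length_Suc:
  "{w \<in> fcfs_states E V. length w = Suc k} =
     (\<Union>p\<in>part ` V. {w. set w \<subseteq> part_class p \<and> length w = Suc k})"
proof (intro set_eqI iffI)
  fix w assume "w \<in> {w \<in> fcfs_states E V. length w = Suc k}"
  then obtain x u where "w = x # u" "set w \<subseteq> V" "\<forall>j\<in>set w. part j = part x" "length w = Suc k"
    by (auto simp: fcfs_states_iff length_Suc_conv)
  then show "w \<in> (\<Union>p\<in>part ` V. {w. set w \<subseteq> part_class p \<and> length w = Suc k})"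
    by (auto simp: part_class_def)
qed (auto simp: fcfs_states_iff part_class_def subset_iff)

lemma nbhd_part_class:
  assumes "S \<subseteq> part_class p" "S \<noteq> {}"
  shows "nbhd E V S = V - part_class p"
proof -
  obtain x where "x \<in> S"
    using assms(2) by blast
  have "E i j \<longleftrightarrow> j \<in> V \<and> part j \<noteq> p" if "i \<in> S" for i j
    using assms(1) that by (auto simp: edge_iff part_class_def)
  then show ?thesis
    using \<open>x \<in> S\<close> by (auto simp: nbhd_def part_class_def)
qed

lemma fcfs_weight_class_word:
  assumes "set w \<subseteq> part_class p"
  shows "fcfs_weight alpha E V w =
     (\<Prod>i<length w. alpha (w ! i) / (alpha_sum alpha V - alpha_sum alpha (part_class p)))"
proof -
  have "alpha_sum alpha (nbhd E V (set (take (Suc i) w))) =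
        alpha_sum alpha V - alpha_sum alpha (part_class p)" if "i < length w" for i
  proof -
    have "set (take (Suc i) w) \<subseteq> part_class p" "set (take (Suc i) w) \<noteq> {}"
      using assms that set_take_subset[of "Suc i" w] by (auto simp: take_eq_Nil)
    then show ?thesis
      using finite_V by (simp add: nbhd_part_class alpha_sum_def sum_diff part_class_def)
  qed
  then show ?thesis
    unfolding fcfs_weight_def by (intro prod.cong) auto
qed

lemma sum_fcfs_weight_class_words:
  "sum (fcfs_weight alpha E V) {w. set w \<subseteq> part_class p \<and> length w = k} = class_ratio alpha p ^ k"
proof -
  let ?c = "alpha_sum alpha V - alpha_sum alpha (part_class p)"
  have "sum (fcfs_weight alpha E V) {w. set w \<subseteq> part_class p \<and> length w = k}
      = (\<Sum>w | set w \<subseteq> part_class p \<and> length w = k. \<Prod>i<k. alpha (w ! i) / ?c)"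
    by (intro sum.cong) (auto simp: fcfs_weight_class_word)
  also have "\<dots> = (\<Sum>x\<in>part_class p. alpha x / ?c) ^ k"
    using finite_V by (intro sum_prod_lists_length_eq) (simp add: part_class_def)
  finally show ?thesis
    by (simp add: class_ratio_def alpha_sum_def sum_divide_distrib)
qed

lemma finite_fcfs_states_length: "finite {w \<in> fcfs_states E V. length w = k}"
  by (rule finite_subset[OF _ finite_lists_length_eq[OF finite_V, of k]])
    (auto simp: fcfs_states_iff)

lemma sum_fcfs_weight_length:
  "sum (fcfs_weight alpha E V) {w \<in> fcfs_states E V. length w = k} =
     (if k = 0 then 1 else \<Sum>p\<in>part ` V. class_ratio alpha p ^ k)"
proof (cases k)
  case 0
  then have "{w \<in> fcfs_states E V. length w = k} = {[]}"
    by (auto simp: fcfs_states_iff)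
  then show ?thesis
    using 0 by (simp add: fcfs_weight_def)
next
  case (Suc n)
  have "sum (fcfs_weight alpha E V) {w \<in> fcfs_states E V. length w = k}
      = (\<Sum>p\<in>part ` V. sum (fcfs_weight alpha E V) {w. set w \<subseteq> part_class p \<and> length w = k})"
    unfolding Suc fcfs_states_length_Suc
  proof (rule sum.UNION_disjoint)
    show "finite (part ` V)" using finite_V by simp
    show "\<forall>p\<in>part ` V. finite {w. set w \<subseteq> part_class p \<and> length w = Suc n}"
      using finite_V by (auto intro: finite_lists_length_eq simp: part_class_def)
    show "\<forall>p\<in>part ` V. \<forall>q\<in>part ` V. p \<noteq> q \<longrightarrow>
        {w. set w \<subseteq> part_class p \<and> length w = Suc n} \<inter> {w. set w \<subseteq> part_class q \<and> length w = Suc n} = {}"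
      by (auto simp: part_class_def length_Suc_conv)
  qed
  then show ?thesis
    using Suc by (simp add: sum_fcfs_weight_class_words)
qed

lemma sums_fcfs_weight_length:
  assumes "\<And>p. p \<in> part ` V \<Longrightarrow> \<bar>class_ratio alpha p\<bar> < 1"
  shows "(\<lambda>k. sum (fcfs_weight alpha E V) {w \<in> fcfs_states E V. length w = k})
           sums (1 + (\<Sum>p\<in>part ` V. class_ratio alpha p / (1 - class_ratio alpha p)))"
    and "(\<lambda>k. real k * sum (fcfs_weight alpha E V) {w \<in> fcfs_states E V. length w = k})
           sums (\<Sum>p\<in>part ` V. class_ratio alpha p / (1 - class_ratio alpha p)^2)"
proof -
  let ?r = "class_ratio alpha"
  let ?slice = "\<lambda>k. sum (fcfs_weight alpha E V) {w \<in> fcfs_states E V. length w = k}"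
  have "(\<lambda>n. \<Sum>p\<in>part ` V. ?r p ^ Suc n) sums (\<Sum>p\<in>part ` V. ?r p / (1 - ?r p))"
    using assms by (intro sums_sum geometric_sums_Suc) auto
  then have "(\<lambda>n. ?slice (Suc n)) sums (\<Sum>p\<in>part ` V. ?r p / (1 - ?r p))"
    by (simp only: sum_fcfs_weight_length nat.distinct if_False)
  then have "?slice sums ((\<Sum>p\<in>part ` V. ?r p / (1 - ?r p)) + ?slice 0)"
    by (rule sums_Suc_iff[THEN iffD1])
  moreover have "?slice 0 = 1"
    by (simp only: sum_fcfs_weight_length) simp
  ultimately show "?slice sums (1 + (\<Sum>p\<in>part ` V. ?r p / (1 - ?r p)))"
    by (simp only: add.commute)
  have "(\<lambda>k. \<Sum>p\<in>part ` V. real k * ?r p ^ k) sums (\<Sum>p\<in>part ` V. ?r p / (1 - ?r p)^2)"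
    using assms by (intro sums_sum weighted_geometric_sums) auto
  moreover have "(\<lambda>k. real k * ?slice k) = (\<lambda>k. \<Sum>p\<in>part ` V. real k * ?r p ^ k)"
    by (rule ext) (simp add: sum_fcfs_weight_length sum_distrib_left)
  ultimately show "(\<lambda>k. real k * ?slice k) sums (\<Sum>p\<in>part ` V. ?r p / (1 - ?r p)^2)"
    by simp
qed

theorem fcfs_mean_Q_eq:
  assumes nonneg: "\<And>i. i \<in> V \<Longrightarrow> 0 \<le> alpha i"
    and stable: "\<And>p. p \<in> part ` V \<Longrightarrow> 2 * alpha_sum alpha (part_class p) < alpha_sum alpha V"
  defines "s \<equiv> \<lambda>p. alpha_sum alpha (part_class p) /
    (alpha_sum alpha V - 2 * alpha_sum alpha (part_class p))"
  shows "fcfs_mean_Q alpha E V = (\<Sum>p\<in>part ` V. s p * (1 + s p)) / (1 + (\<Sum>p\<in>part ` V. s p))"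
proof -
  let ?r = "class_ratio alpha"
  have ratio: "\<bar>?r p\<bar> < 1" "?r p / (1 - ?r p) = s p" "?r p / (1 - ?r p)^2 = s p * (1 + s p)"
    if "p \<in> part ` V" for p
  proof -
    have "0 \<le> alpha_sum alpha (part_class p)"
      using nonneg by (auto simp: alpha_sum_def part_class_def intro: sum_nonneg)
    from geometric_ratio_identities[OF this stable[OF that]]
    show "\<bar>?r p\<bar> < 1" "?r p / (1 - ?r p) = s p" "?r p / (1 - ?r p)^2 = s p * (1 + s p)"
      by (simp_all add: class_ratio_def s_def)
  qed
  have "(\<Sum>p\<in>part ` V. ?r p / (1 - ?r p)) = (\<Sum>p\<in>part ` V. s p)"
    "(\<Sum>p\<in>part ` V. ?r p / (1 - ?r p)^2) = (\<Sum>p\<in>part ` V. s p * (1 + s p))"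
    using ratio by (auto intro: sum.cong)
  with sums_fcfs_weight_length[of alpha] ratio(1)
  have mass: "(\<lambda>k. sum (fcfs_weight alpha E V) {w \<in> fcfs_states E V. length w = k})
                sums (1 + (\<Sum>p\<in>part ` V. s p))"
    and moment: "(\<lambda>k. real k * sum (fcfs_weight alpha E V) {w \<in> fcfs_states E V. length w = k})
                sums (\<Sum>p\<in>part ` V. s p * (1 + s p))"
    by simp_all
  show ?thesis
    unfolding fcfs_mean_Q_def fcfs_pi_def
    using nonneg by (intro mean_length_by_slices[OF finite_fcfs_states_length _ mass moment]
      fcfs_weight_nonneg)
qed

end

section \<open>Certified signs of real polynomials\<close>

fun horner :: "real list \<Rightarrow> real \<Rightarrow> real" where
  "horner [] x = 0"
| "horner (c # cs) x = c + x * horner cs x"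

fun coeffs_add :: "real list \<Rightarrow> real list \<Rightarrow> real list" where
  "coeffs_add [] ds = ds"
| "coeffs_add cs [] = cs"
| "coeffs_add (c # cs) (d # ds) = (c + d) # coeffs_add cs ds"

lemma horner_coeffs_add: "horner (coeffs_add cs ds) x = horner cs x + horner ds x"
  by (induction cs ds rule: coeffs_add.induct) (auto simp: algebra_simps)

lemma horner_scale: "horner (map (\<lambda>y. a * y) cs) x = a * horner cs x"
  by (induction cs) (auto simp: algebra_simps)

lemma horner_uminus: "horner (map uminus cs) x = - horner cs x"
  by (induction cs) auto

fun taylor_shift :: "real \<Rightarrow> real list \<Rightarrow> real list" where
  "taylor_shift a [] = []"
| "taylor_shift a (c # cs) =
     coeffs_add [c] (coeffs_add (map (\<lambda>y. a * y) (taylor_shift a cs)) (0 # taylor_shift a cs))"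

lemma horner_taylor_shift: "horner (taylor_shift a cs) t = horner cs (a + t)"
  by (induction cs) (auto simp: horner_coeffs_add horner_scale algebra_simps)

fun coeffs_deriv :: "real list \<Rightarrow> real list" where
  "coeffs_deriv [] = []"
| "coeffs_deriv (c # cs) = coeffs_add cs (0 # coeffs_deriv cs)"

lemma horner_has_real_derivative:
  "(horner cs has_real_derivative horner (coeffs_deriv cs) x) (at x)"
proof (induction cs)
  case (Cons c cs)
  have "((\<lambda>x. c + x * horner cs x) has_real_derivative
      0 + (1 * horner cs x + horner (coeffs_deriv cs) x * x)) (at x)"
    by (intro DERIV_add DERIV_const DERIV_mult DERIV_ident Cons)
  then show ?case
    by (simp add: horner_coeffs_add mult.commute)
qed simp

fun horner_enclosure :: "real \<Rightarrow> real list \<Rightarrow> real \<times> real" where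
  "horner_enclosure h [] = (0, 0)"
| "horner_enclosure h (c # cs) =
     (case horner_enclosure h cs of (l, u) \<Rightarrow> (c + min 0 (h * l), c + max 0 (h * u)))"

lemma horner_enclosure:
  assumes "0 \<le> t" "t \<le> h"
  shows "fst (horner_enclosure h cs) \<le> horner cs t \<and> horner cs t \<le> snd (horner_enclosure h cs)"
proof (induction cs)
  case (Cons c cs)
  obtain l u where lu: "horner_enclosure h cs = (l, u)"
    by fastforce
  with Cons have "l \<le> horner cs t" "horner cs t \<le> u"
    by auto
  have "min 0 (h * l) \<le> t * horner cs t"
  proof (cases "0 \<le> l")
    case False
    then have "h * l \<le> t * l"
      using assms by (simp add: mult_right_mono_neg)
    also have "\<dots> \<le> t * horner cs t"
      using \<open>l \<le> horner cs t\<close> assms by (simp add: mult_left_mono)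
    finally show ?thesis
      by simp
  qed (use \<open>l \<le> horner cs t\<close> assms in simp)
  moreover have "t * horner cs t \<le> max 0 (h * u)"
  proof (cases "u \<le> 0")
    case True
    then show ?thesis
      using \<open>horner cs t \<le> u\<close> assms by (simp add: mult_nonneg_nonpos)
  next
    case False
    have "t * horner cs t \<le> t * u"
      using \<open>horner cs t \<le> u\<close> assms by (simp add: mult_left_mono)
    also have "\<dots> \<le> h * u"
      using False assms by (simp add: mult_right_mono)
    finally show ?thesis
      by simp
  qed
  ultimately show ?case
    by (simp add: lu)
qed simp

fun horner_pos_cert :: "real list \<Rightarrow> real list \<Rightarrow> bool" where
  "horner_pos_cert cs (a # b # bs) =
     (a \<le> b \<and> 0 < fst (horner_enclosure (b - a) (taylor_shift a cs)) \<and>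
      (bs = [] \<or> horner_pos_cert cs (b # bs)))"
| "horner_pos_cert cs _ = False"

lemma horner_pos_cert_sound:
  assumes "horner_pos_cert cs bs" "hd bs \<le> x" "x \<le> last bs"
  shows "0 < horner cs x"
  using assms
proof (induction cs bs rule: horner_pos_cert.induct)
  case (1 cs a b bs)
  show ?case
  proof (cases "x \<le> b")
    case True
    then show ?thesis
      using 1(2,3) horner_enclosure[of "x - a" "b - a" "taylor_shift a cs"]
      by (auto simp: horner_taylor_shift)
  next
    case False
    then show ?thesis
      using 1 by (auto split: if_splits)
  qed
qed auto

lemma sign_change_of_decreasing:
  fixes f f' :: "real \<Rightarrow> real"
  assumes "a \<le> b"
    and deriv: "\<And>x. a \<le> x \<Longrightarrow> x \<le> b \<Longrightarrow> (f has_real_derivative f' x) (at x)"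
    and neg: "\<And>x. a \<le> x \<Longrightarrow> x \<le> b \<Longrightarrow> f' x < 0"
    and "0 < f a" "f b < 0"
  obtains r where "a < r" "r < b"
    "\<And>x. a \<le> x \<Longrightarrow> x \<le> b \<Longrightarrow> 0 < f x \<longleftrightarrow> x < r"
    "\<And>x. a \<le> x \<Longrightarrow> x \<le> b \<Longrightarrow> f x < 0 \<longleftrightarrow> r < x"
proof -
  have "continuous_on {a..b} f"
    using deriv by (intro continuous_at_imp_continuous_on ballI DERIV_isCont) auto
  then obtain r where r: "a \<le> r" "r \<le> b" "f r = 0"
    using IVT2'[of f b 0 a] assms(1,4,5) by auto
  have decreasing: "f y < f x" if "a \<le> x" "x < y" "y \<le> b" for x y
  proof (rule DERIV_neg_imp_decreasing[OF \<open>x < y\<close>])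
    fix t
    assume "x \<le> t" "t \<le> y"
    with that have "a \<le> t" "t \<le> b"
      by linarith+
    then show "\<exists>z. (f has_real_derivative z) (at t) \<and> z < 0"
      using deriv neg by blast
  qed
  have sign: "(0 < f x \<longleftrightarrow> x < r) \<and> (f x < 0 \<longleftrightarrow> r < x)" if "a \<le> x" "x \<le> b" for x
  proof (cases x r rule: linorder_cases)
    case less
    then show ?thesis
      using decreasing[of x r] r that by simp
  next
    case equal
    then show ?thesis
      using r by simp
  next
    case greater
    then show ?thesis
      using decreasing[of r x] r that by simp
  qed
  have "r \<noteq> a" "r \<noteq> b"
    using r assms(4,5) by auto
  with r have "a < r" "r < b"
    by linarith+
  then show ?thesis
    using that sign by blast
qed

section \<open>The Braess example\<close>

definition braess_coeffs :: "real list" where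
  "braess_coeffs = [1, -34, 376, -1744, 3712, -7168, 24576, -36864]"

lemma braess_coeffs_pos_left:
  "0 \<le> x \<Longrightarrow> x \<le> 563/10000 \<Longrightarrow> 0 < horner braess_coeffs x"
  by (rule horner_pos_cert_sound[of _
        "[0, 563/20000, 1689/40000, 3941/80000, 1689/32000, 17453/320000, 35469/640000, 563/10000]"])
    (simp_all add: braess_coeffs_def)

lemma braess_coeffs_neg_middle:
  "564/10000 \<le> x \<Longrightarrow> x \<le> 267/2000 \<Longrightarrow> horner braess_coeffs x < 0"
  using horner_pos_cert_sound[of "map uminus braess_coeffs"
      "[564/10000, 1899/20000, 4569/40000, 9909/80000, 267/2000]" x]
  unfolding horner_uminus by (simp add: braess_coeffs_def)

lemma braess_coeffs_pos_right:
  "269/2000 \<le> x \<Longrightarrow> x \<le> 1/6 \<Longrightarrow> 0 < horner braess_coeffs x"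
  by (rule horner_pos_cert_sound[of _ "[269/2000, 1/6]"]) (simp_all add: braess_coeffs_def)

lemma braess_coeffs_deriv_neg:
  "563/10000 \<le> x \<Longrightarrow> x \<le> 564/10000 \<Longrightarrow> horner (coeffs_deriv braess_coeffs) x < 0"
  using horner_pos_cert_sound[of "map uminus (coeffs_deriv braess_coeffs)" "[563/10000, 564/10000]" x]
  unfolding horner_uminus by (simp add: braess_coeffs_def)

lemma braess_coeffs_deriv_pos:
  "267/2000 \<le> x \<Longrightarrow> x \<le> 269/2000 \<Longrightarrow> 0 < horner (coeffs_deriv braess_coeffs) x"
  by (rule horner_pos_cert_sound[of _ "[267/2000, 269/2000]"]) (simp_all add: braess_coeffs_def)

lemma braess_coeffs_sign:
  obtains \<delta>\<^sub>1 \<delta>\<^sub>2 where "563/10000 < \<delta>\<^sub>1" "\<delta>\<^sub>1 < 564/10000" "267/2000 < \<delta>\<^sub>2" "\<delta>\<^sub>2 < 269/2000"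
    "\<And>\<delta>. 0 < \<delta> \<Longrightarrow> \<delta> < 1/6 \<Longrightarrow> 0 < horner braess_coeffs \<delta> \<longleftrightarrow> \<delta> < \<delta>\<^sub>1 \<or> \<delta>\<^sub>2 < \<delta>"
proof -
  let ?Q = "horner braess_coeffs" and ?Q' = "horner (coeffs_deriv braess_coeffs)"
  obtain \<delta>\<^sub>1 where \<delta>\<^sub>1: "563/10000 < \<delta>\<^sub>1" "\<delta>\<^sub>1 < 564/10000"
    "\<And>x. 563/10000 \<le> x \<Longrightarrow> x \<le> 564/10000 \<Longrightarrow> 0 < ?Q x \<longleftrightarrow> x < \<delta>\<^sub>1"
    by (rule sign_change_of_decreasing[of "563/10000" "564/10000" ?Q ?Q'])
      (use horner_has_real_derivative braess_coeffs_deriv_neg braess_coeffs_pos_left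
        braess_coeffs_neg_middle in auto)
  obtain \<delta>\<^sub>2 where \<delta>\<^sub>2: "267/2000 < \<delta>\<^sub>2" "\<delta>\<^sub>2 < 269/2000"
    "\<And>x. 267/2000 \<le> x \<Longrightarrow> x \<le> 269/2000 \<Longrightarrow> - ?Q x < 0 \<longleftrightarrow> \<delta>\<^sub>2 < x"
    by (rule sign_change_of_decreasing[of "267/2000" "269/2000" "\<lambda>x. - ?Q x" "\<lambda>x. - ?Q' x"])
      (use horner_has_real_derivative braess_coeffs_deriv_pos braess_coeffs_pos_right
        braess_coeffs_neg_middle in \<open>auto intro: DERIV_minus\<close>)
  show ?thesis
  proof (rule that[OF \<delta>\<^sub>1(1,2) \<delta>\<^sub>2(1,2)])
    fix \<delta> :: real
    assume "0 < \<delta>" "\<delta> < 1/6"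
    then consider "\<delta> \<le> 563/10000" | "563/10000 \<le> \<delta>" "\<delta> \<le> 564/10000"
      | "564/10000 \<le> \<delta>" "\<delta> \<le> 267/2000" | "267/2000 \<le> \<delta>" "\<delta> \<le> 269/2000" | "269/2000 \<le> \<delta>"
      by linarith
    then show "0 < ?Q \<delta> \<longleftrightarrow> \<delta> < \<delta>\<^sub>1 \<or> \<delta>\<^sub>2 < \<delta>"
    proof cases
      case 1
      then show ?thesis using braess_coeffs_pos_left \<open>0 < \<delta>\<close> \<delta>\<^sub>1(1) by auto
    next
      case 2
      then show ?thesis using \<delta>\<^sub>1(3) \<delta>\<^sub>2(1) by auto
    next
      case 3
      then show ?thesis using braess_coeffs_neg_middle \<delta>\<^sub>1(2) \<delta>\<^sub>2(1) by fastforce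
    next
      case 4
      then show ?thesis using \<delta>\<^sub>2(3) \<delta>\<^sub>1(2) by auto
    next
      case 5
      then show ?thesis using braess_coeffs_pos_right \<open>\<delta> < 1/6\<close> \<delta>\<^sub>2(2) by auto
    qed
  qed
qed

lemma braess_cross_difference:
  fixes d :: real
  assumes "0 < d" "d < 1/6"
  defines "s1 \<equiv> (1 - 4*d) / (2 * (1 + 4*d))" and "s12 \<equiv> (1 - 4*d) / (8*d)"
    and "s3 \<equiv> (1 - 2*d) / (4*d)" and "s4 \<equiv> 3*d / (1 - 6*d)"
  shows "(2 * (s1 * (1 + s1)) + s3 * (1 + s3) + s4 * (1 + s4)) * (1 + s12 + s3 + s4)
       - (s12 * (1 + s12) + s3 * (1 + s3) + s4 * (1 + s4)) * (1 + 2 * s1 + s3 + s4)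
       = horner braess_coeffs d / (256 * d^3 * (1 + 4*d)^2 * (1 - 6*d)^2)"
proof -
  (* With the factors 1 + 4d and 1 - 6d named, field_simps treats them as atomic denominators. *)
  define p e where "p = 1 + 4*d" and "e = 1 - 6*d"
  have nonzero: "d \<noteq> 0" "p \<noteq> 0" "e \<noteq> 0"
    using assms(1,2) by (auto simp: p_def e_def)
  have "s1 = (1 - 4*d) / (2 * p)" "s4 = 3*d / e"
    by (simp_all add: s1_def s4_def p_def e_def)
  then have "(2 * (s1 * (1 + s1)) + s3 * (1 + s3) + s4 * (1 + s4)) * (1 + s12 + s3 + s4)
       - (s12 * (1 + s12) + s3 * (1 + s3) + s4 * (1 + s4)) * (1 + 2 * s1 + s3 + s4)
       = horner braess_coeffs d / (256 * d^3 * p^2 * e^2)"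
    using nonzero unfolding s12_def s3_def
    by (simp add: field_simps braess_coeffs_def) (unfold p_def e_def, algebra)
  then show ?thesis
    by (simp add: p_def e_def)
qed

lemma braess_iff_horner:
  fixes d :: real
  assumes "0 < d" "d < 1/6"
  defines "s1 \<equiv> (1 - 4*d) / (2 * (1 + 4*d))" and "s12 \<equiv> (1 - 4*d) / (8*d)"
    and "s3 \<equiv> (1 - 2*d) / (4*d)" and "s4 \<equiv> 3*d / (1 - 6*d)"
  shows "(s12 * (1 + s12) + s3 * (1 + s3) + s4 * (1 + s4)) / (1 + s12 + s3 + s4)
       < (2 * (s1 * (1 + s1)) + s3 * (1 + s3) + s4 * (1 + s4)) / (1 + 2 * s1 + s3 + s4)
     \<longleftrightarrow> 0 < horner braess_coeffs d" (is "?N / ?Z < ?N' / ?Z' \<longleftrightarrow> _")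
proof -
  have "0 < s1" "0 < s12" "0 < s3" "0 < s4"
    using assms(1,2) by (simp_all add: s1_def s12_def s3_def s4_def)
  then have "0 < ?Z" "0 < ?Z'"
    by simp_all
  then have "?N / ?Z < ?N' / ?Z' \<longleftrightarrow> 0 < ?N' * ?Z - ?N * ?Z'"
    by (simp add: field_simps)
  also have "\<dots> \<longleftrightarrow> 0 < horner braess_coeffs d / (256 * d^3 * (1 + 4*d)^2 * (1 - 6*d)^2)"
    by (simp only: braess_cross_difference[OF assms(1,2), folded s1_def s12_def s3_def s4_def])
  also have "\<dots> \<longleftrightarrow> 0 < horner braess_coeffs d"
    using assms(1,2) by (simp add: pos_less_divide_eq)
  finally show ?thesis .
qed

interpretation Gbar: complete_multipartite Gbar_edge V4 "\<lambda>i. i"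
  by unfold_locales (auto simp: V4_def Gbar_edge_def doubleton_eq_iff)

interpretation G: complete_multipartite G_edge V4 "\<lambda>i. if i = 2 then 1 else i"
  by unfold_locales (auto simp: V4_def G_edge_def doubleton_eq_iff)

lemma alpha_delta_V4:
  assumes "0 < \<delta>" "\<delta> < 1/6"
  shows "alpha_sum (alpha_delta \<delta>) V4 = 1" "\<And>i. 0 \<le> alpha_delta \<delta> i"
  using assms by (auto simp: alpha_delta_def alpha_sum_def V4_def)

lemma fcfs_mean_Q_Gbar_edge:
  assumes "0 < \<delta>" "\<delta> < 1/6"
  defines "s1 \<equiv> (1 - 4*\<delta>) / (2 * (1 + 4*\<delta>))" and "s3 \<equiv> (1 - 2*\<delta>) / (4*\<delta>)"
    and "s4 \<equiv> 3*\<delta> / (1 - 6*\<delta>)"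
  shows "fcfs_mean_Q (alpha_delta \<delta>) Gbar_edge V4
       = (2 * (s1 * (1 + s1)) + s3 * (1 + s3) + s4 * (1 + s4)) / (1 + 2 * s1 + s3 + s4)"
proof -
  let ?a = "alpha_delta \<delta>"
  define t where "t i = ?a i / (1 - 2 * ?a i)" for i
  have classes: "Gbar.part_class i = {i}" if "i \<in> V4" for i
    using that by (auto simp: Gbar.part_class_def)
  have t: "alpha_sum ?a (Gbar.part_class i) /
      (alpha_sum ?a V4 - 2 * alpha_sum ?a (Gbar.part_class i)) = t i"
    and stable: "2 * alpha_sum ?a (Gbar.part_class i) < alpha_sum ?a V4" if "i \<in> V4" for i
    unfolding classes[OF that] alpha_delta_V4(1)[OF assms(1,2)]
    using that assms(1,2) by (auto simp: alpha_sum_def t_def V4_def alpha_delta_def)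
  have "t 1 = s1" "t 2 = s1" "t 3 = s3" "t 4 = s4"
    using assms(1,2) by (simp_all add: t_def alpha_delta_def s1_def s3_def s4_def field_simps)
  moreover have "fcfs_mean_Q ?a Gbar_edge V4 = (\<Sum>i\<in>V4. t i * (1 + t i)) / (1 + (\<Sum>i\<in>V4. t i))"
    using Gbar.fcfs_mean_Q_eq[OF alpha_delta_V4(2)[OF assms(1,2)] stable]
    by (simp add: t cong: sum.cong)
  ultimately show ?thesis
    by (simp add: V4_def add.assoc)
qed

lemma fcfs_mean_Q_G_edge:
  assumes "0 < \<delta>" "\<delta> < 1/6"
  defines "s12 \<equiv> (1 - 4*\<delta>) / (8*\<delta>)" and "s3 \<equiv> (1 - 2*\<delta>) / (4*\<delta>)"
    and "s4 \<equiv> 3*\<delta> / (1 - 6*\<delta>)"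
  shows "fcfs_mean_Q (alpha_delta \<delta>) G_edge V4
       = (s12 * (1 + s12) + s3 * (1 + s3) + s4 * (1 + s4)) / (1 + s12 + s3 + s4)"
proof -
  let ?a = "alpha_delta \<delta>"
  define t where "t p = alpha_sum ?a (G.part_class p) / (1 - 2 * alpha_sum ?a (G.part_class p))" for p
  have parts: "(\<lambda>i. if i = 2 then 1 else i) ` V4 = {1, 3, 4}"
    by (auto simp: V4_def)
  have classes: "G.part_class 1 = {1, 2}" "G.part_class 3 = {3}" "G.part_class 4 = {4}"
    unfolding G.part_class_def by (auto simp: V4_def)
  have stable: "2 * alpha_sum ?a (G.part_class p) < alpha_sum ?a V4"
    if "p \<in> (\<lambda>i. if i = 2 then 1 else i) ` V4" for p
  proof -
    have "p \<in> {1, 3, 4}"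
      using that parts by blast
    then show ?thesis
      unfolding alpha_delta_V4(1)[OF assms(1,2)]
      using assms(1,2) by (auto simp: classes[simplified] alpha_sum_def alpha_delta_def)
  qed
  have "fcfs_mean_Q ?a G_edge V4 = (\<Sum>p\<in>{1, 3, 4}. t p * (1 + t p)) / (1 + (\<Sum>p\<in>{1, 3, 4}. t p))"
    using G.fcfs_mean_Q_eq[OF alpha_delta_V4(2)[OF assms(1,2)] stable]
    unfolding parts alpha_delta_V4(1)[OF assms(1,2)] t_def .
  moreover have "t 1 = s12" "t 3 = s3" "t 4 = s4"
    unfolding t_def classes
    using assms(1,2) by (simp_all add: alpha_sum_def alpha_delta_def s12_def s3_def s4_def field_simps)
  ultimately show ?thesis
    by (simp add: add.assoc)
qed

theorem mainTheorem3:
  shows "\<exists>\<delta>\<^sub>1 \<delta>\<^sub>2 :: real. 0 < \<delta>\<^sub>1 \<and> \<delta>\<^sub>1 < \<delta>\<^sub>2 \<and> \<delta>\<^sub>2 < 1/6 \<and>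
     \<bar>\<delta>\<^sub>1 - 0.0563\<bar> < 0.0001 \<and> \<bar>\<delta>\<^sub>2 - 0.134\<bar> < 0.001 \<and>
     (\<forall>\<delta>::real. 0 < \<delta> \<and> \<delta> < 1/6 \<longrightarrow>
        (fcfs_mean_Q (alpha_delta \<delta>) Gbar_edge V4 > fcfs_mean_Q (alpha_delta \<delta>) G_edge V4
         \<longleftrightarrow> (\<delta> < \<delta>\<^sub>1 \<or> \<delta>\<^sub>2 < \<delta>)))"
proof -
  obtain \<delta>\<^sub>1 \<delta>\<^sub>2 :: real
    where bounds: "563/10000 < \<delta>\<^sub>1" "\<delta>\<^sub>1 < 564/10000" "267/2000 < \<delta>\<^sub>2" "\<delta>\<^sub>2 < 269/2000"
      and sign: "\<And>\<delta>. 0 < \<delta> \<Longrightarrow> \<delta> < 1/6 \<Longrightarrow> 0 < horner braess_coeffs \<delta> \<longleftrightarrow> \<delta> < \<delta>\<^sub>1 \<or> \<delta>\<^sub>2 < \<delta>"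
    using braess_coeffs_sign by blast
  have "fcfs_mean_Q (alpha_delta \<delta>) Gbar_edge V4 > fcfs_mean_Q (alpha_delta \<delta>) G_edge V4
      \<longleftrightarrow> \<delta> < \<delta>\<^sub>1 \<or> \<delta>\<^sub>2 < \<delta>" if "0 < \<delta>" "\<delta> < 1/6" for \<delta>
    unfolding fcfs_mean_Q_Gbar_edge[OF that] fcfs_mean_Q_G_edge[OF that] braess_iff_horner[OF that]
    using sign[OF that] .
  moreover have "\<bar>\<delta>\<^sub>1 - 0.0563\<bar> < 0.0001" "\<bar>\<delta>\<^sub>2 - 0.134\<bar> < 0.001"
    unfolding abs_less_iff using bounds by simp_all
  ultimately show ?thesis
    using bounds by (intro exI[of _ \<delta>\<^sub>1] exI[of _ \<delta>\<^sub>2] conjI allI impI) auto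
qed

end
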